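(* Let $M$ be a monoid in $\mathcal{C}$. Then $M$ is finitary if and only if every face submonoid of $M$ is finitary; likewise, $M$ is weakly finitary if and only if every face submonoid of $M$ is weakly finitary.
   Context: Convention: all monoids are commutative, cancellative, and reduced, written additively; $M^\bullet=M\setminus\{0\}$. $\mathcal{C}$ is the class of monoids isomorphic to a submonoid of a free commutative monoid of finite rank (equivalently, of $(\mathbb{N}^d,+)$). $M$ is regarded as a submonoid of $V=\mathbb{R}\otimes_\mathbb{Z}\mathrm{gp}(M)$; $\mathsf{cone}_V(M)$ is the set of finite nonnegative linear combinations of elements of $M$. A face of a cone $C$ is a cone $F\subseteq C$ such that whenever $x,y\in C$ and $F$ meets the open segment between $x$ and $y$, then $x,y\in F$; a face submonoid is $M\cap F$ for a face $F$ of $\mathsf{cone}_V(M)$. A monoid is a BFM if every element is a sum of atoms and each element has a finite set of factorization lengths. $M$ is finitary if it is a BFM and there exist a finite $S\subseteq M$ and a positive integer $n$ with $nM^\bullet\subseteq S+M$, where $nM^\bullet=\{x_1+\dots+x_n: x_i\in M^\bullet\}$. $M$ is weakly finitary if there exist a finite $S\subseteq M$ and a positive integer $n$ with $nx\in S+M$ for all $x\in M^\bullet$. *)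

theory Defs
  imports "HOL-Analysis.Analysis"
begin

text \<open>Monoids in the class C are modelled as submonoids of (nat^d, +), with d = CARD('n).\<close>

definition submonoid :: "'a::comm_monoid_add set \<Rightarrow> bool" where
  "submonoid M \<longleftrightarrow> 0 \<in> M \<and> (\<forall>x\<in>M. \<forall>y\<in>M. x + y \<in> M)"

definition atoms :: "'a::comm_monoid_add set \<Rightarrow> 'a set" where
  "atoms M = {a \<in> M. a \<noteq> 0 \<and> (\<forall>b\<in>M. \<forall>c\<in>M. a = b + c \<longrightarrow> b = 0 \<or> c = 0)}"

definition lengths :: "'a::comm_monoid_add set \<Rightarrow> 'a \<Rightarrow> nat set" where
  "lengths M x = {length as | as. set as \<subseteq> atoms M \<and> sum_list as = x}"

definition BFM :: "'a::comm_monoid_add set \<Rightarrow> bool" where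
  "BFM M \<longleftrightarrow> (\<forall>x\<in>M. lengths M x \<noteq> {} \<and> finite (lengths M x))"

definition nfold_nonzero :: "nat \<Rightarrow> 'a::comm_monoid_add set \<Rightarrow> 'a set" where
  "nfold_nonzero n M = {sum_list xs | xs. length xs = n \<and> set xs \<subseteq> M - {0}}"

definition setplus :: "'a::comm_monoid_add set \<Rightarrow> 'a set \<Rightarrow> 'a set" where
  "setplus S M = {s + m | s m. s \<in> S \<and> m \<in> M}"

definition finitary :: "'a::comm_monoid_add set \<Rightarrow> bool" where
  "finitary M \<longleftrightarrow> BFM M \<and>
     (\<exists>S n. finite S \<and> S \<subseteq> M \<and> n > 0 \<and> nfold_nonzero n M \<subseteq> setplus S M)"

definition weakly_finitary :: "'a::comm_monoid_add set \<Rightarrow> bool" where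
  "weakly_finitary M \<longleftrightarrow>
     (\<exists>S n. finite S \<and> S \<subseteq> M \<and> n > 0 \<and>
        (\<forall>x \<in> M - {0}. sum_list (replicate n x) \<in> setplus S M))"

definition emb :: "nat ^ 'n \<Rightarrow> real ^ 'n" where
  "emb x = (\<chi> i. real (x $ i))"

definition mcone :: "(nat ^ 'n) set \<Rightarrow> (real ^ 'n) set" where
  "mcone M = {\<Sum>i<k. c i *\<^sub>R emb (v i) | (k::nat) c v. (\<forall>i<k. c i \<ge> 0 \<and> v i \<in> M)}"

definition is_cone :: "'a::real_vector set \<Rightarrow> bool" where
  "is_cone F \<longleftrightarrow> 0 \<in> F \<and> (\<forall>x\<in>F. \<forall>y\<in>F. x + y \<in> F) \<and> (\<forall>c\<ge>0. \<forall>x\<in>F. c *\<^sub>R x \<in> F)"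

definition is_face :: "'a::real_vector set \<Rightarrow> 'a set \<Rightarrow> bool" where
  "is_face C F \<longleftrightarrow> is_cone F \<and> F \<subseteq> C \<and>
     (\<forall>x\<in>C. \<forall>y\<in>C. (\<exists>t. 0 < t \<and> t < 1 \<and> (1 - t) *\<^sub>R x + t *\<^sub>R y \<in> F) \<longrightarrow> x \<in> F \<and> y \<in> F)"

definition face_submonoid :: "(nat ^ 'n) set \<Rightarrow> (real ^ 'n) set \<Rightarrow> (nat ^ 'n) set" where
  "face_submonoid M F = {x \<in> M. emb x \<in> F}"

end

theory Submission
  imports Defs
begin

text \<open>A face submonoid N of M is divisor-closed in M: if x, y \<in> M and x + y \<in> N, then
  x, y \<in> N, because the midpoint of 2x and 2y lies on the face. Atoms and factorizations
  of elements of N in M therefore coincide with those in N, and intersecting a witness set S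
  for (weak) finitarity of M with N gives one for N. Conversely, the whole cone is a face whose
  face submonoid is M itself.\<close>

definition divisor_closed :: "'a::comm_monoid_add set \<Rightarrow> 'a set \<Rightarrow> bool" where
  "divisor_closed M N \<longleftrightarrow> N \<subseteq> M \<and> (\<forall>x\<in>M. \<forall>y\<in>M. x + y \<in> N \<longrightarrow> x \<in> N \<and> y \<in> N)"

lemma submonoid_sum_list:
  assumes "submonoid M" "set xs \<subseteq> M"
  shows "sum_list xs \<in> M"
  using assms by (induction xs) (auto simp: submonoid_def)

lemma divisor_closed_sum_list:
  assumes "submonoid M" "divisor_closed M N" "set xs \<subseteq> M" "sum_list xs \<in> N"
  shows "set xs \<subseteq> N"
  using assms(3,4)
proof (induction xs)
  case (Cons x xs)
  then have "sum_list xs \<in> M" using submonoid_sum_list[OF assms(1)] by simp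
  with Cons have "x \<in> N \<and> sum_list xs \<in> N" using assms(2) unfolding divisor_closed_def by auto
  with Cons show ?case by simp
qed simp

lemma atoms_subset: "atoms M \<subseteq> M"
  unfolding atoms_def by blast

lemma atoms_divisor_closed:
  assumes "divisor_closed M N"
  shows "atoms N = atoms M \<inter> N"
proof (intro equalityI subsetI)
  have "N \<subseteq> M" and split: "\<And>b c. b \<in> M \<Longrightarrow> c \<in> M \<Longrightarrow> b + c \<in> N \<Longrightarrow> b \<in> N \<and> c \<in> N"
    using assms unfolding divisor_closed_def by auto
  fix a assume "a \<in> atoms N"
  then have a: "a \<in> N" "a \<noteq> 0"
    and irreducible: "\<And>b c. b \<in> N \<Longrightarrow> c \<in> N \<Longrightarrow> a = b + c \<Longrightarrow> b = 0 \<or> c = 0"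
    unfolding atoms_def by auto
  have "b = 0 \<or> c = 0" if "b \<in> M" "c \<in> M" "a = b + c" for b c
    using split[OF that(1,2)] irreducible that(3) a(1) by auto
  with a \<open>N \<subseteq> M\<close> show "a \<in> atoms M \<inter> N" unfolding atoms_def by auto
next
  fix a assume "a \<in> atoms M \<inter> N"
  with assms show "a \<in> atoms N" unfolding divisor_closed_def atoms_def by blast
qed

lemma lengths_divisor_closed:
  assumes "submonoid M" "divisor_closed M N" "x \<in> N"
  shows "lengths N x = lengths M x"
proof -
  have "set as \<subseteq> atoms N \<longleftrightarrow> set as \<subseteq> atoms M" if "sum_list as = x" for as
  proof
    assume "set as \<subseteq> atoms M"
    moreover from this have "set as \<subseteq> N"
      using divisor_closed_sum_list[OF assms(1,2)] atoms_subset that assms(3) by blast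
    ultimately show "set as \<subseteq> atoms N" using atoms_divisor_closed[OF assms(2)] by blast
  qed (use atoms_divisor_closed[OF assms(2)] in blast)
  then show ?thesis unfolding lengths_def by metis
qed

lemma BFM_divisor_closed:
  assumes "submonoid M" "divisor_closed M N" "BFM M"
  shows "BFM N"
  unfolding BFM_def
proof
  fix x assume "x \<in> N"
  then have "x \<in> M" using assms(2) unfolding divisor_closed_def by blast
  with assms(3) \<open>x \<in> N\<close> show "lengths N x \<noteq> {} \<and> finite (lengths N x)"
    unfolding BFM_def by (simp add: lengths_divisor_closed[OF assms(1,2)])
qed

lemma setplus_divisor_closed:
  assumes "divisor_closed M N" "S \<subseteq> M" "x \<in> N" "x \<in> setplus S M"
  shows "x \<in> setplus (S \<inter> N) N"
proof -
  obtain s m where "x = s + m" "s \<in> S" "m \<in> M" using assms(4) unfolding setplus_def by blast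
  moreover from this have "s \<in> N \<and> m \<in> N" using assms(1-3) unfolding divisor_closed_def by blast
  ultimately show ?thesis unfolding setplus_def by blast
qed

lemma finitary_divisor_closed:
  assumes "submonoid M" "submonoid N" "divisor_closed M N" "finitary M"
  shows "finitary N"
proof -
  obtain S n where S: "finite S" "S \<subseteq> M" "n > 0" "nfold_nonzero n M \<subseteq> setplus S M"
    using assms(4) unfolding finitary_def by blast
  have "nfold_nonzero n N \<subseteq> nfold_nonzero n M"
    using assms(3) unfolding nfold_nonzero_def divisor_closed_def by blast
  moreover have "nfold_nonzero n N \<subseteq> N"
    using submonoid_sum_list[OF assms(2)] unfolding nfold_nonzero_def by blast
  ultimately have "nfold_nonzero n N \<subseteq> setplus (S \<inter> N) N"
    using setplus_divisor_closed[OF assms(3) S(2)] S(4) by blast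
  moreover have "BFM N" using BFM_divisor_closed assms unfolding finitary_def by blast
  ultimately show ?thesis using S(1,3) unfolding finitary_def by blast
qed

lemma weakly_finitary_divisor_closed:
  assumes "submonoid N" "divisor_closed M N" "weakly_finitary M"
  shows "weakly_finitary N"
proof -
  obtain S n where S: "finite S" "S \<subseteq> M" "n > 0"
      "\<forall>x \<in> M - {0}. sum_list (replicate n x) \<in> setplus S M"
    using assms(3) unfolding weakly_finitary_def by blast
  have "sum_list (replicate n x) \<in> setplus (S \<inter> N) N" if "x \<in> N - {0}" for x
  proof (rule setplus_divisor_closed[OF assms(2) S(2)])
    have "set (replicate n x) \<subseteq> N" using that by auto
    then show "sum_list (replicate n x) \<in> N" by (rule submonoid_sum_list[OF assms(1)])
    show "sum_list (replicate n x) \<in> setplus S M"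
      using S(4) that assms(2) unfolding divisor_closed_def by blast
  qed
  then show ?thesis using S(1,3) unfolding weakly_finitary_def by blast
qed

lemma face_add_memD:
  assumes "is_cone C" "is_face C F" "x \<in> C" "y \<in> C" "x + y \<in> F"
  shows "x \<in> F" "y \<in> F"
proof -
  have face: "\<And>u w. u \<in> C \<Longrightarrow> w \<in> C \<Longrightarrow>
      \<exists>t. 0 < t \<and> t < 1 \<and> (1 - t) *\<^sub>R u + t *\<^sub>R w \<in> F \<Longrightarrow> u \<in> F \<and> w \<in> F"
    and scale_F: "\<And>c u. 0 \<le> c \<Longrightarrow> u \<in> F \<Longrightarrow> c *\<^sub>R u \<in> F"
    using assms(2) unfolding is_face_def is_cone_def by blast+
  have "2 *\<^sub>R x \<in> C" "2 *\<^sub>R y \<in> C" using assms(1,3,4) unfolding is_cone_def by auto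
  moreover have "\<exists>t. 0 < t \<and> t < 1 \<and> (1 - t) *\<^sub>R (2 *\<^sub>R x) + t *\<^sub>R (2 *\<^sub>R y) \<in> F"
    by (rule exI[of _ "1/2"]) (simp add: assms(5))
  ultimately have "2 *\<^sub>R x \<in> F \<and> 2 *\<^sub>R y \<in> F" by (rule face)
  then show "x \<in> F" "y \<in> F"
    using scale_F[of "1/2" "2 *\<^sub>R x"] scale_F[of "1/2" "2 *\<^sub>R y"] by simp_all
qed

lemma emb_add: "emb (x + y) = emb x + emb y"
  by (simp add: emb_def vec_eq_iff)

lemma emb_zero: "emb 0 = 0"
  by (simp add: emb_def vec_eq_iff)

lemma scaleR_emb_in_mcone: "x \<in> M \<Longrightarrow> c \<ge> 0 \<Longrightarrow> c *\<^sub>R emb x \<in> mcone M"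
  unfolding mcone_def by (rule CollectI, rule exI[of _ 1]) auto

lemma emb_in_mcone: "x \<in> M \<Longrightarrow> emb x \<in> mcone M"
  using scaleR_emb_in_mcone[of x M 1] by simp

lemma sum_lessThan_add:
  "(\<Sum>i<a + b. f i) = (\<Sum>i<a. f i) + (\<Sum>i<b. f (a + i))" for f :: "nat \<Rightarrow> 'b::comm_monoid_add"
  by (induction b) (simp_all add: add.assoc)

lemma is_cone_mcone: "is_cone (mcone M)"
  unfolding is_cone_def
proof (intro conjI ballI allI impI)
  show "0 \<in> mcone M" unfolding mcone_def by (rule CollectI, rule exI[of _ 0]) simp
next
  fix x y assume "x \<in> mcone M" "y \<in> mcone M"
  then obtain k1 k2 :: nat and c1 v1 c2 v2 where
    x: "x = (\<Sum>i<k1. c1 i *\<^sub>R emb (v1 i))" "\<forall>i<k1. c1 i \<ge> 0 \<and> v1 i \<in> M" and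
    y: "y = (\<Sum>i<k2. c2 i *\<^sub>R emb (v2 i))" "\<forall>i<k2. c2 i \<ge> 0 \<and> v2 i \<in> M"
    unfolding mcone_def by blast
  define c where "c i = (if i < k1 then c1 i else c2 (i - k1))" for i
  define v where "v i = (if i < k1 then v1 i else v2 (i - k1))" for i
  have "x + y = (\<Sum>i<k1 + k2. c i *\<^sub>R emb (v i))"
    unfolding sum_lessThan_add x y c_def v_def by simp
  moreover have "\<forall>i<k1 + k2. c i \<ge> 0 \<and> v i \<in> M"
    using x(2) y(2) unfolding c_def v_def by auto
  ultimately show "x + y \<in> mcone M" unfolding mcone_def by blast
next
  fix a :: real and x assume "0 \<le> a" "x \<in> mcone M"
  then obtain k :: nat and c v where
    x: "x = (\<Sum>i<k. c i *\<^sub>R emb (v i))" "\<forall>i<k. c i \<ge> 0 \<and> v i \<in> M"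
    unfolding mcone_def by blast
  have "a *\<^sub>R x = (\<Sum>i<k. (a * c i) *\<^sub>R emb (v i))"
    unfolding x by (simp add: scaleR_sum_right)
  moreover have "\<forall>i<k. a * c i \<ge> 0 \<and> v i \<in> M" using x(2) \<open>0 \<le> a\<close> by auto
  ultimately show "a *\<^sub>R x \<in> mcone M" unfolding mcone_def mem_Collect_eq
    by (intro exI[of _ k] exI[of _ "\<lambda>i. a * c i"] exI[of _ v]) simp
qed

lemma is_face_mcone: "is_face (mcone M) (mcone M)"
  unfolding is_face_def using is_cone_mcone by blast

lemma face_submonoid_mcone: "face_submonoid M (mcone M) = M"
  unfolding face_submonoid_def using emb_in_mcone by blast

lemma submonoid_face_submonoid:
  assumes "submonoid M" "is_face (mcone M) F"
  shows "submonoid (face_submonoid M F)"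
proof -
  have "is_cone F" using assms(2) unfolding is_face_def by blast
  then have "0 \<in> F" "\<And>u w. u \<in> F \<Longrightarrow> w \<in> F \<Longrightarrow> u + w \<in> F"
    unfolding is_cone_def by blast+
  with assms(1) show ?thesis
    unfolding submonoid_def face_submonoid_def by (simp add: emb_add emb_zero)
qed

lemma divisor_closed_face_submonoid:
  assumes "is_face (mcone M) F"
  shows "divisor_closed M (face_submonoid M F)"
  unfolding divisor_closed_def face_submonoid_def
  using face_add_memD[OF is_cone_mcone assms emb_in_mcone emb_in_mcone] by (auto simp: emb_add)

theorem mainTheorem16:
  fixes M :: "(nat ^ 'n) set"
  assumes "submonoid M"
  shows "(finitary M \<longleftrightarrow>
            (\<forall>F. is_face (mcone M) F \<longrightarrow> finitary (face_submonoid M F))) \<and>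
         (weakly_finitary M \<longleftrightarrow>
            (\<forall>F. is_face (mcone M) F \<longrightarrow> weakly_finitary (face_submonoid M F)))"
proof -
  have sub: "submonoid (face_submonoid M F)" and dc: "divisor_closed M (face_submonoid M F)"
    if "is_face (mcone M) F" for F
    using submonoid_face_submonoid[OF assms that] divisor_closed_face_submonoid[OF that] by auto
  have "finitary M \<longleftrightarrow> (\<forall>F. is_face (mcone M) F \<longrightarrow> finitary (face_submonoid M F))"
    using finitary_divisor_closed[OF assms sub dc] is_face_mcone[of M] face_submonoid_mcone[of M]
    by metis
  moreover have
    "weakly_finitary M \<longleftrightarrow> (\<forall>F. is_face (mcone M) F \<longrightarrow> weakly_finitary (face_submonoid M F))"
    using weakly_finitary_divisor_closed[OF sub dc] is_face_mcone[of M] face_submonoid_mcone[of M]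
    by metis
  ultimately show ?thesis ..
qed

end
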